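(* Let $G$ be a digraph on $n$ vertices with $\delta^0(G)\geq n/2$. Let $d\geq0$ and suppose $A,B,S,T$ is a partition of $V(G)$ into sets of sizes $a,b,s,t$ with $t\geq s\geq d+2$ and $b=a+d$. Then $G$ contains a set $M$ of $d+1$ edges in $E(T,S\cup B)\cup E(B,S)$ such that the endvertices of edges of $M$ lying outside $B$ are all distinct (no vertex outside $B$ is an endvertex of two edges of $M$), and each vertex of $B$ is an endvertex of at most one edge of $M\cap E(T,B)$ and at most one edge of $M\cap E(B,S)$. Moreover, if $E(T,S)\neq\emptyset$, then $M$ contains an edge of $E(T,S)$.
   Context: Digraphs have no loops and at most one edge in each direction between two vertices; $\delta^0$ is the minimum semidegree (minimum of all in- and outdegrees). $E(X,Y)$ denotes the set of edges $xy$ of $G$ with $x\in X$ and $y\in Y$. *)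

theory Defs
  imports Main
begin

text \<open>A digraph is a finite vertex set V with an edge set E of ordered pairs,
  without loops; at most one edge in each direction is automatic for a set of pairs.\<close>
definition digraph :: "'a set \<Rightarrow> ('a \<times> 'a) set \<Rightarrow> bool" where
  "digraph V E \<longleftrightarrow> finite V \<and> E \<subseteq> V \<times> V \<and> (\<forall>v. (v, v) \<notin> E)"

definition outdeg :: "('a \<times> 'a) set \<Rightarrow> 'a \<Rightarrow> nat" where
  "outdeg E v = card {w. (v, w) \<in> E}"

definition indeg :: "('a \<times> 'a) set \<Rightarrow> 'a \<Rightarrow> nat" where
  "indeg E v = card {u. (u, v) \<in> E}"

text \<open>Minimum semidegree of the digraph (V,E), for V nonempty.\<close>
definition min_semideg :: "'a set \<Rightarrow> ('a \<times> 'a) set \<Rightarrow> nat" where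
  "min_semideg V E = Min ((outdeg E ` V) \<union> (indeg E ` V))"

definition edges_between :: "('a \<times> 'a) set \<Rightarrow> 'a set \<Rightarrow> 'a set \<Rightarrow> ('a \<times> 'a) set" where
  "edges_between E X Y = {e \<in> E. fst e \<in> X \<and> snd e \<in> Y}"

definition endvertex :: "'a \<Rightarrow> 'a \<times> 'a \<Rightarrow> bool" where
  "endvertex v e \<longleftrightarrow> v = fst e \<or> v = snd e"

end

theory Submission
  imports Defs
begin

text \<open>
  Call a set M of edges admissible if it lies in E(T, S \<union> B) \<union> E(B, S),
  distinct edges of M have distinct tails and distinct heads, and M meets E(T,S)
  whenever E(T,S) is nonempty.  The endvertex conditions of the theorem follow
  from admissibility alone, because every vertex outside B can only occur as a
  tail (if it lies in T) or only as a head (if it lies in S).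

  An admissible set of size 1 or 0 exists trivially, and we show that every
  admissible M with |M| \<le> d can be enlarged by one edge.  Otherwise pick a vertex
  x \<in> T that is no tail and y \<in> S that is no head of M.  Maximality forces every
  out-neighbour of x in S \<union> B to be the head of an edge of M, every in-neighbour
  of y in T \<union> B to be the tail of an edge of M, and (by an exchange argument)
  no edge uv of M has both xv and uy in E.  Counting then gives
  outdeg(x) + indeg(y) \<le> 2a + s + t - 2 + d < n, contradicting 2 min_semideg \<ge> n.
\<close>

definition allowed_edges :: "('a \<times> 'a) set \<Rightarrow> 'a set \<Rightarrow> 'a set \<Rightarrow> 'a set \<Rightarrow> ('a \<times> 'a) set" where
  "allowed_edges E B S T = edges_between E T (S \<union> B) \<union> edges_between E B S"

definition admissible :: "('a \<times> 'a) set \<Rightarrow> 'a set \<Rightarrow> 'a set \<Rightarrow> 'a set \<Rightarrow> ('a \<times> 'a) set \<Rightarrow> bool" where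
  "admissible E B S T M \<longleftrightarrow> M \<subseteq> allowed_edges E B S T \<and> inj_on fst M \<and> inj_on snd M
     \<and> (edges_between E T S \<noteq> {} \<longrightarrow> M \<inter> edges_between E T S \<noteq> {})"

lemma admissible_finite:
  assumes "digraph V E" "admissible E B S T M"
  shows "finite M"
proof -
  have "M \<subseteq> E" using assms(2) by (auto simp: admissible_def allowed_edges_def edges_between_def)
  moreover have "finite E" using assms(1) finite_subset by (auto simp: digraph_def)
  ultimately show ?thesis by (rule finite_subset)
qed

lemma admissible_small:
  "\<exists>M. admissible E B S T M \<and> card M \<le> 1"
proof (cases "edges_between E T S = {}")
  case True
  then show ?thesis by (intro exI[of _ "{}"]) (auto simp: admissible_def)
next
  case False
  then obtain e where "e \<in> edges_between E T S" by blast
  then have "admissible E B S T {e}"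
    by (auto simp: admissible_def allowed_edges_def edges_between_def)
  then show ?thesis by (intro exI[of _ "{e}"]) auto
qed

lemma admissible_insert:
  assumes M: "admissible E B S T M"
    and e: "e \<in> allowed_edges E B S T" "fst e \<notin> fst ` M" "snd e \<notin> snd ` M"
  shows "admissible E B S T (insert e M)"
  using assms by (auto simp: admissible_def inj_on_insert)

text \<open>Exchange step: replace the edge uv of M by xv and uy, where x is an unused
  tail in T and y an unused head in S; the T\<rightarrow>S invariant survives because xv
  lies in E(T,S) whenever uv does.\<close>
lemma admissible_exchange:
  assumes M: "admissible E B S T M" and e: "e \<in> M"
    and x: "x \<in> T" "x \<notin> fst ` M" and y: "y \<in> S" "y \<notin> snd ` M"
    and xv: "(x, snd e) \<in> E" and uy: "(fst e, y) \<in> E"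
  shows "admissible E B S T (insert (x, snd e) (insert (fst e, y) (M - {e})))"
proof -
  have sub: "M \<subseteq> allowed_edges E B S T" and inj: "inj_on fst M" "inj_on snd M"
    and meets: "edges_between E T S \<noteq> {} \<longrightarrow> M \<inter> edges_between E T S \<noteq> {}"
    using M by (auto simp: admissible_def)
  have ends: "fst e \<in> T \<union> B" "snd e \<in> S \<union> B"
    using sub e by (auto simp: allowed_edges_def edges_between_def)
  have new_allowed: "(x, snd e) \<in> allowed_edges E B S T" "(fst e, y) \<in> allowed_edges E B S T"
    using ends x y xv uy by (auto simp: allowed_edges_def edges_between_def)
  have "fst e \<notin> fst ` (M - {e})" "snd e \<notin> snd ` (M - {e})"
    using inj e by (auto simp: inj_on_def)
  moreover have "x \<noteq> fst e" "y \<noteq> snd e" using x y e by blast+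
  ultimately have "inj_on fst (insert (x, snd e) (insert (fst e, y) (M - {e})))"
      "inj_on snd (insert (x, snd e) (insert (fst e, y) (M - {e})))"
    using inj x y by (auto simp: inj_on_diff)
  moreover have "edges_between E T S \<noteq> {} \<longrightarrow>
      insert (x, snd e) (insert (fst e, y) (M - {e})) \<inter> edges_between E T S \<noteq> {}"
  proof
    assume "edges_between E T S \<noteq> {}"
    then obtain e' where e': "e' \<in> M" "e' \<in> edges_between E T S" using meets by blast
    show "insert (x, snd e) (insert (fst e, y) (M - {e})) \<inter> edges_between E T S \<noteq> {}"
    proof (cases "e' = e")
      case True
      then have "(x, snd e) \<in> edges_between E T S" using e' x xv by (auto simp: edges_between_def)
      then show ?thesis by blast
    next
      case False
      then show ?thesis using e' by blast
    qed
  qed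
  ultimately show ?thesis using sub new_allowed by (auto simp: admissible_def)
qed

lemma card_exchange:
  assumes "finite M" "e \<in> M" "x \<notin> fst ` M" "y \<notin> snd ` M"
  shows "card (insert (x, snd e) (insert (fst e, y) (M - {e}))) = Suc (card M)"
proof -
  have "(fst e, y) \<notin> M - {e}" "(x, snd e) \<notin> insert (fst e, y) (M - {e})"
    using assms by force+
  moreover have "card M > 0" using assms(1,2) card_gt_0_iff by blast
  ultimately show ?thesis using assms(1,2) by simp
qed

lemma exists_not_in_image:
  assumes "finite M" "card M < card X"
  obtains x where "x \<in> X" "x \<notin> f ` M"
proof -
  have "\<not> X \<subseteq> f ` M"
    using assms card_image_le[of M f] card_mono[of "f ` M" X] by fastforce
  then show ?thesis using that by blast
qed

lemma card_nbhd_le: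
  assumes fin: "finite A" "finite Z" "finite P"
    and N: "N \<subseteq> V - {x}" "V \<subseteq> A \<union> Z \<union> R" "N \<inter> R \<subseteq> f ` P" and x: "x \<in> Z"
  shows "card N \<le> card A + (card Z - 1) + card P"
proof -
  have "N \<subseteq> A \<union> (Z - {x}) \<union> f ` P" using N by blast
  then have "card N \<le> card (A \<union> (Z - {x}) \<union> f ` P)" using fin by (intro card_mono) auto
  also have "\<dots> \<le> card A + card (Z - {x}) + card (f ` P)"
    by (meson card_Un_le add_le_mono order_trans le_refl)
  also have "\<dots> \<le> card A + (card Z - 1) + card P" using fin x card_image_le[of P f] by simp
  finally show ?thesis .
qed

lemma card_partition4:
  assumes "finite (A \<union> B \<union> S \<union> T)"
    and "A \<inter> B = {}" "A \<inter> S = {}" "A \<inter> T = {}" "B \<inter> S = {}" "B \<inter> T = {}" "S \<inter> T = {}"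
  shows "card (A \<union> B \<union> S \<union> T) = card A + card B + card S + card T"
  using assms by (simp add: card_Un_disjoint Int_Un_distrib2)

lemma min_semideg_le:
  assumes "finite V" "v \<in> V"
  shows "min_semideg V E \<le> outdeg E v" "min_semideg V E \<le> indeg E v"
  using assms by (auto simp: min_semideg_def intro: Min_le)

lemma card_fibre_le_1:
  assumes "finite M" "inj_on f M"
  shows "card {e \<in> M. f e = v} \<le> 1"
  using assms by (auto simp: card_le_Suc0_iff_eq inj_on_def)

lemma nonextendable_blocks_edge:
  assumes M: "admissible E B S T M" "finite M"
    and maximal: "\<not> (\<exists>M'. admissible E B S T M' \<and> card M' = Suc (card M))"
    and e: "e \<in> allowed_edges E B S T"
  shows "fst e \<in> fst ` M \<or> snd e \<in> snd ` M"
proof (rule ccontr)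
  assume "\<not> ?thesis"
  then have "admissible E B S T (insert e M)" "e \<notin> M"
    using admissible_insert[OF M(1) e] by force+
  then show False using maximal M(2) by auto
qed

lemma nonextendable_blocks_exchange:
  assumes M: "admissible E B S T M" "finite M"
    and maximal: "\<not> (\<exists>M'. admissible E B S T M' \<and> card M' = Suc (card M))"
    and e: "e \<in> M" and x: "x \<in> T" "x \<notin> fst ` M" and y: "y \<in> S" "y \<notin> snd ` M"
  shows "\<not> ((x, snd e) \<in> E \<and> (fst e, y) \<in> E)"
  using maximal admissible_exchange[OF M(1) e x y] card_exchange[OF M(2) e x(2) y(2)] by blast

lemma admissible_augment:
  assumes dg: "digraph V E" and deg: "2 * min_semideg V E \<ge> card V"
    and part: "A \<union> B \<union> S \<union> T = V"
    and disj: "A \<inter> B = {}" "A \<inter> S = {}" "A \<inter> T = {}" "B \<inter> S = {}" "B \<inter> T = {}" "S \<inter> T = {}"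
    and sizes: "d < card S" "d < card T" "card B = card A + d"
    and M: "admissible E B S T M" "card M \<le> d"
  shows "\<exists>M'. admissible E B S T M' \<and> card M' = Suc (card M)"
proof (rule ccontr)
  assume maximal: "\<not> ?thesis"
  have fV: "finite V" and EV: "E \<subseteq> V \<times> V" and loopless: "\<And>v. (v, v) \<notin> E"
    using dg by (auto simp: digraph_def)
  have fM: "finite M" using admissible_finite[OF dg M(1)] .
  have fin: "finite A" "finite B" "finite S" "finite T" using fV part by auto
  have "card M < card T" "card M < card S" using M(2) sizes by linarith+
  then obtain x y where x: "x \<in> T" "x \<notin> fst ` M" and y: "y \<in> S" "y \<notin> snd ` M"
    using exists_not_in_image[OF fM] by metis
  define P where "P = {e \<in> M. (x, snd e) \<in> E}"
  define Q where "Q = {e \<in> M. (fst e, y) \<in> E}"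
  have "P \<inter> Q = {}"
    using nonextendable_blocks_exchange[OF M(1) fM maximal _ x y] by (auto simp: P_def Q_def)
  then have "card P + card Q = card (P \<union> Q)" using fM by (simp add: P_def Q_def card_Un_disjoint)
  also have "\<dots> \<le> card M" using fM by (intro card_mono) (auto simp: P_def Q_def)
  finally have PQ: "card P + card Q \<le> card M" .
  have "{w. (x, w) \<in> E} \<inter> (S \<union> B) \<subseteq> snd ` P"
  proof
    fix w assume w: "w \<in> {w. (x, w) \<in> E} \<inter> (S \<union> B)"
    then have "(x, w) \<in> allowed_edges E B S T" using x by (auto simp: allowed_edges_def edges_between_def)
    then have "w \<in> snd ` M" using nonextendable_blocks_edge[OF M(1) fM maximal] x by fastforce
    then show "w \<in> snd ` P" using w by (auto simp: P_def)
  qed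
  then have out: "outdeg E x \<le> card A + (card T - 1) + card P"
    unfolding outdeg_def using fin fM EV loopless part x(1)
    by (intro card_nbhd_le[where V = V and R = "S \<union> B"]) (auto simp: P_def)
  have "{w. (w, y) \<in> E} \<inter> (T \<union> B) \<subseteq> fst ` Q"
  proof
    fix w assume w: "w \<in> {w. (w, y) \<in> E} \<inter> (T \<union> B)"
    then have "(w, y) \<in> allowed_edges E B S T" using y by (auto simp: allowed_edges_def edges_between_def)
    then have "w \<in> fst ` M" using nonextendable_blocks_edge[OF M(1) fM maximal] y by fastforce
    then show "w \<in> fst ` Q" using w by (auto simp: Q_def)
  qed
  then have "indeg E y \<le> card A + (card S - 1) + card Q"
    unfolding indeg_def using fin fM EV loopless part y(1)
    by (intro card_nbhd_le[where V = V and R = "T \<union> B"]) (auto simp: Q_def)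
  moreover have "card V = card A + card B + card S + card T"
    using card_partition4[of A B S T] part fV disj by simp
  moreover have "min_semideg V E \<le> outdeg E x" "min_semideg V E \<le> indeg E y"
    using min_semideg_le[OF fV] x y part by auto
  ultimately show False
    using out deg sizes M(2) PQ by linarith
qed

text \<open>Every vertex outside B is the endvertex of at most one edge of an admissible
  set: vertices of T only occur as tails, all other ones only as heads.\<close>
lemma admissible_endvertex_outside_B:
  assumes M: "admissible E B S T M" "finite M"
    and disj: "B \<inter> T = {}" "S \<inter> T = {}" and v: "v \<notin> B"
  shows "card {e \<in> M. endvertex v e} \<le> 1"
proof (cases "v \<in> T")
  case True
  then have "{e \<in> M. endvertex v e} = {e \<in> M. fst e = v}"
    using M(1) disj by (auto simp: admissible_def allowed_edges_def edges_between_def endvertex_def)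
  then show ?thesis using card_fibre_le_1[of M fst v] M by (simp add: admissible_def)
next
  case False
  then have "{e \<in> M. endvertex v e} = {e \<in> M. snd e = v}"
    using M(1) v by (auto simp: admissible_def allowed_edges_def edges_between_def endvertex_def)
  then show ?thesis using card_fibre_le_1[of M snd v] M by (simp add: admissible_def)
qed

lemma admissible_endvertex_in_B:
  assumes M: "admissible E B S T M" "finite M"
    and disj: "B \<inter> S = {}" "B \<inter> T = {}" and v: "v \<in> B"
  shows "card {e \<in> M \<inter> edges_between E T B. endvertex v e} \<le> 1"
    and "card {e \<in> M \<inter> edges_between E B S. endvertex v e} \<le> 1"
proof -
  have inj: "inj_on fst M" "inj_on snd M" using M(1) by (auto simp: admissible_def)
  have "{e \<in> M \<inter> edges_between E T B. endvertex v e} \<subseteq> {e \<in> M. snd e = v}"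
    using disj v by (auto simp: edges_between_def endvertex_def)
  then have "card {e \<in> M \<inter> edges_between E T B. endvertex v e} \<le> card {e \<in> M. snd e = v}"
    using M(2) by (intro card_mono) auto
  also have "\<dots> \<le> 1" using card_fibre_le_1[OF M(2) inj(2)] .
  finally show "card {e \<in> M \<inter> edges_between E T B. endvertex v e} \<le> 1" .
  have "{e \<in> M \<inter> edges_between E B S. endvertex v e} \<subseteq> {e \<in> M. fst e = v}"
    using disj v by (auto simp: edges_between_def endvertex_def)
  then have "card {e \<in> M \<inter> edges_between E B S. endvertex v e} \<le> card {e \<in> M. fst e = v}"
    using M(2) by (intro card_mono) auto
  also have "\<dots> \<le> 1" using card_fibre_le_1[OF M(2) inj(1)] .
  finally show "card {e \<in> M \<inter> edges_between E B S. endvertex v e} \<le> 1" .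
qed

lemma grow_to_card:
  assumes start: "P M0" "card M0 \<le> N"
    and step: "\<And>M. P M \<Longrightarrow> card M < N \<Longrightarrow> \<exists>M'. P M' \<and> card M' = Suc (card M)"
  shows "\<exists>M. P M \<and> card M = N"
proof -
  have "\<exists>M. P M \<and> card M = card M0 + k" if "card M0 + k \<le> N" for k
    using that
  proof (induction k)
    case 0
    then show ?case using start by auto
  next
    case (Suc k)
    then obtain M where M: "P M" "card M = card M0 + k" by auto
    then have "card M < N" using Suc.prems by simp
    then obtain M' where "P M'" "card M' = Suc (card M)" using step M(1) by blast
    then show ?case using M(2) by auto
  qed
  from this[of "N - card M0"] show ?thesis using start by auto
qed

theorem proposition5p6:
  fixes V :: "'a set" and E :: "('a \<times> 'a) set" and A B S T :: "'a set" and d :: nat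
  assumes "digraph V E"
    and "V \<noteq> {}"
    and "2 * min_semideg V E \<ge> card V"
    and "A \<union> B \<union> S \<union> T = V"
    and "A \<inter> B = {}" and "A \<inter> S = {}" and "A \<inter> T = {}"
    and "B \<inter> S = {}" and "B \<inter> T = {}" and "S \<inter> T = {}"
    and "card T \<ge> card S" and "card S \<ge> d + 2"
    and "card B = card A + d"
  shows "\<exists>M. M \<subseteq> edges_between E T (S \<union> B) \<union> edges_between E B S
            \<and> card M = d + 1
            \<and> (\<forall>v. v \<notin> B \<longrightarrow> card {e \<in> M. endvertex v e} \<le> 1)
            \<and> (\<forall>v \<in> B. card {e \<in> M \<inter> edges_between E T B. endvertex v e} \<le> 1
                       \<and> card {e \<in> M \<inter> edges_between E B S. endvertex v e} \<le> 1)
            \<and> (edges_between E T S \<noteq> {} \<longrightarrow> M \<inter> edges_between E T S \<noteq> {})"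
proof -
  obtain M0 where M0: "admissible E B S T M0" "card M0 \<le> 1"
    using admissible_small by blast
  have sizes: "d < card S" "d < card T" using assms(11,12) by linarith+
  have "\<exists>M. admissible E B S T M \<and> card M = d + 1"
  proof (rule grow_to_card[where P = "admissible E B S T", OF M0(1)])
    show "card M0 \<le> d + 1" using M0(2) by simp
    show "\<exists>M'. admissible E B S T M' \<and> card M' = Suc (card M)"
      if "admissible E B S T M" "card M < d + 1" for M
      using admissible_augment[OF assms(1,3-10) sizes assms(13) that(1)] that(2) by simp
  qed
  then obtain M where M: "admissible E B S T M" "card M = d + 1" by blast
  have fM: "finite M" using admissible_finite[OF assms(1) M(1)] .
  show ?thesis
    using M admissible_endvertex_outside_B[OF M(1) fM assms(9,10)]
      admissible_endvertex_in_B[OF M(1) fM assms(8,9)]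
    by (auto simp: admissible_def allowed_edges_def)
qed

end
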